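(* Let $\mathcal{X}$ and $\mathcal{Y}$ be infinite-dimensional Banach spaces with Schauder bases $\{x_n\}_{n\ge1}$ and $\{y_n\}_{n\ge1}$, let $f:\mathcal{X}\to\mathcal{Y}$ be a (non-linear) Hölder continuous operator, and let $\mathcal{F}$ be a universal approximator. For every $\varepsilon>0$ and every compact $K\subseteq\mathcal{X}$ there exist $n,N,q\in\mathbb{N}_+$, $\hat f\in\bigcup_c\mathcal{F}_{n,N,c}$ and vectors $z^{(1)},\dots,z^{(N)}\in\mathbb{R}^q$ such that the operator $$\hat t(x)=\sum_{j=1}^N\sum_{i=1}^q\Big[P_{\Delta_N}\circ\hat f\big((\beta^x_k)_{k=1}^n\big)\Big]_j\,z^{(j)}_i\,y_i$$ satisfies $\sup_{x\in K}\|\hat t(x)-f(x)\|_{\mathcal{Y}}<\varepsilon$, where $x=\sum_{k\ge1}\beta^x_kx_k$ is the Schauder expansion of $x$.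
   Context: $P_{\Delta_N}$ is the Euclidean orthogonal projection of $\mathbb{R}^N$ onto the simplex $\Delta_N=\{w\in[0,1]^N:\sum w_i=1\}$. A universal approximator is a family $\mathcal{F}=\{\mathcal{F}_{n,m,c}\}$ of sets of maps $\mathbb{R}^n\to\mathbb{R}^m$, nested in $c$, with a rate function $r(\omega,K,n,m,c)$ decreasing to $0$ in $c$, such that every uniformly continuous $f:\mathbb{R}^n\to\mathbb{R}^m$ with continuous modulus $\omega$ is approximated on every compact $K$ within $r(\omega,K,n,m,c)$ by some element of $\mathcal{F}_{n,m,c}$. *)

theory Defs
  imports "HOL-Analysis.Analysis"
begin

text \<open>Euclidean space R^n, represented by functions nat => real vanishing from index n on
  (coordinate k of R^n, k = 1..n, is stored at index k - 1).\<close>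
definition euclid :: "nat \<Rightarrow> (nat \<Rightarrow> real) set" where
  "euclid n = {v. \<forall>i\<ge>n. v i = 0}"

definition enorm :: "nat \<Rightarrow> (nat \<Rightarrow> real) \<Rightarrow> real" where
  "enorm n v = sqrt (\<Sum>i<n. (v i)\<^sup>2)"

definition prob_simplex :: "nat \<Rightarrow> (nat \<Rightarrow> real) set" where
  "prob_simplex N = {w \<in> euclid N. (\<forall>i<N. 0 \<le> w i \<and> w i \<le> 1) \<and> (\<Sum>i<N. w i) = 1}"

definition proj_simplex :: "nat \<Rightarrow> (nat \<Rightarrow> real) \<Rightarrow> (nat \<Rightarrow> real)" where
  "proj_simplex N u = (THE w. w \<in> prob_simplex N \<and>
      (\<forall>v\<in>prob_simplex N. enorm N (u - w) \<le> enorm N (u - v)))"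

definition modulus :: "(real \<Rightarrow> real) \<Rightarrow> bool" where
  "modulus \<omega> \<longleftrightarrow> continuous_on {0..} \<omega> \<and> \<omega> 0 = 0 \<and> mono_on {0..} \<omega> \<and> (\<forall>t\<ge>0. 0 \<le> \<omega> t)"

definition unif_cont_mod ::
  "(real \<Rightarrow> real) \<Rightarrow> nat \<Rightarrow> nat \<Rightarrow> ((nat \<Rightarrow> real) \<Rightarrow> (nat \<Rightarrow> real)) \<Rightarrow> bool" where
  "unif_cont_mod \<omega> n m f \<longleftrightarrow> (\<forall>v\<in>euclid n. f v \<in> euclid m) \<and>
     (\<forall>u\<in>euclid n. \<forall>v\<in>euclid n. enorm m (f u - f v) \<le> \<omega> (enorm n (u - v)))"

definition universal_approximator ::
  "(nat \<Rightarrow> nat \<Rightarrow> nat \<Rightarrow> ((nat \<Rightarrow> real) \<Rightarrow> (nat \<Rightarrow> real)) set) \<Rightarrow> bool" where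
  "universal_approximator F \<longleftrightarrow>
    (\<forall>n m c. \<forall>g\<in>F n m c. \<forall>v\<in>euclid n. g v \<in> euclid m) \<and>
    (\<forall>n m c c'. c \<le> c' \<longrightarrow> F n m c \<subseteq> F n m c') \<and>
    (\<exists>r :: (real \<Rightarrow> real) \<Rightarrow> (nat \<Rightarrow> real) set \<Rightarrow> nat \<Rightarrow> nat \<Rightarrow> nat \<Rightarrow> real.
       (\<forall>\<omega> K n m. antimono (r \<omega> K n m) \<and> (r \<omega> K n m \<longlonglongrightarrow> 0)) \<and>
       (\<forall>\<omega> n m f K c. modulus \<omega> \<longrightarrow> unif_cont_mod \<omega> n m f \<longrightarrow>
          compact K \<longrightarrow> K \<subseteq> euclid n \<longrightarrow>
          (\<exists>g\<in>F n m c. \<forall>v\<in>K. enorm m (f v - g v) \<le> r \<omega> K n m c)))"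

text \<open>Schauder basis (indexed from 0): every x has a unique norm-convergent expansion.\<close>
definition schauder_basis :: "(nat \<Rightarrow> 'a::real_normed_vector) \<Rightarrow> bool" where
  "schauder_basis b \<longleftrightarrow> (\<forall>x. \<exists>!\<beta>. (\<lambda>n. \<Sum>k<n. \<beta> k *\<^sub>R b k) \<longlonglongrightarrow> x)"

definition schauder_coeff :: "(nat \<Rightarrow> 'a::real_normed_vector) \<Rightarrow> 'a \<Rightarrow> nat \<Rightarrow> real" where
  "schauder_coeff b x = (THE \<beta>. (\<lambda>n. \<Sum>k<n. \<beta> k *\<^sub>R b k) \<longlonglongrightarrow> x)"

definition infinite_dimensional :: "'a::real_vector itself \<Rightarrow> bool" where
  "infinite_dimensional _ \<longleftrightarrow> \<not> (\<exists>S::'a set. finite S \<and> span S = UNIV)"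

definition holder_continuous :: "('a::real_normed_vector \<Rightarrow> 'b::real_normed_vector) \<Rightarrow> bool" where
  "holder_continuous f \<longleftrightarrow> (\<exists>C \<alpha>. 0 \<le> C \<and> 0 < \<alpha> \<and> \<alpha> \<le> 1 \<and>
     (\<forall>x y. norm (f x - f y) \<le> C * norm (x - y) powr \<alpha>))"

end

theory Submission
  imports Defs
begin

text \<open>
  The coefficient functionals of a Schauder basis are continuous (the basis constant is finite, by a
  Baire category argument), so on a compact set \<open>K\<close> the truncated expansions converge uniformly
  and the first \<open>n\<close> coefficients determine \<open>x\<close> up to a small error.
  Pick a finite net \<open>p\<^sub>1, \<dots>, p\<^sub>N\<close> of \<open>K\<close> and let the network approximate the Lipschitz
  map \<open>v \<mapsto> (-L \<parallel>\<Sum>\<^sub>k v\<^sub>k x\<^sub>k - p\<^sub>j\<parallel>)\<^sub>j\<close> within \<open>1/4\<close>.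
  Projection onto the simplex only keeps coordinates within \<open>1\<close> of the maximum, so
  all its weight lies on net points close to \<open>x\<close>; taking \<open>z\<^sup>(\<^sup>j\<^sup>)\<close> to be the truncated
  coefficients of \<open>f(p\<^sub>j)\<close>, the output is a convex combination of points near \<open>f(x)\<close>.
\<close>

lemma eventually_sequentially_ex_ge:
  assumes "\<forall>\<^sub>F n in sequentially. P n"
  obtains n where "n \<ge> m" "P n"
proof -
  obtain N where "\<And>n. n \<ge> N \<Longrightarrow> P n"
    using assms unfolding eventually_sequentially by blast
  then show ?thesis
    using that[of "max N m"] by simp
qed

lemma compact_indexed_net:
  assumes "compact K" "r > 0"
  obtains N :: nat and p where "N \<ge> 1" "\<forall>x\<in>K. \<exists>j<N. dist x (p j) < r"
proof -
  obtain P where "finite P" and cover: "K \<subseteq> (\<Union>c\<in>P. ball c r)"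
    using seq_compact_imp_totally_bounded[OF compact_imp_seq_compact[OF \<open>compact K\<close>]] \<open>r > 0\<close>
    by blast
  then obtain ps where "set ps = P"
    using finite_list by blast
  define qs where "qs = undefined # ps"
  have "\<exists>j<length qs. dist x (qs ! j) < r" if x: "x \<in> K" for x
  proof -
    obtain c where "c \<in> set ps" "dist c x < r"
      using cover x \<open>set ps = P\<close> by auto
    then obtain j where "j < length ps" "ps ! j = c"
      by (auto simp: in_set_conv_nth)
    then show ?thesis
      using \<open>dist c x < r\<close> by (intro exI[of _ "Suc j"]) (simp add: qs_def dist_commute)
  qed
  then show ?thesis
    using that[of "length qs" "(!) qs"] by (simp add: qs_def)
qed

lemma uniform_limit_equi_lipschitz_compact:
  fixes f :: "nat \<Rightarrow> 'a::metric_space \<Rightarrow> 'b::metric_space"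
  assumes "compact K" and f: "\<And>n. C-lipschitz_on K (f n)" and g: "C-lipschitz_on K g"
    and lim: "\<And>x. x \<in> K \<Longrightarrow> (\<lambda>n. f n x) \<longlonglongrightarrow> g x"
  shows "uniform_limit K f g sequentially"
proof (rule uniform_limitI)
  fix e :: real assume "e > 0"
  have "C \<ge> 0"
    using g by (rule lipschitz_on_nonneg)
  define \<eta> where "\<eta> = e / (3 * (C + 1))"
  have "\<eta> > 0" and C\<eta>: "C * \<eta> < e / 3"
    using \<open>e > 0\<close> \<open>C \<ge> 0\<close> by (simp_all add: \<eta>_def field_simps)
  have "\<exists>P. finite P \<and> P \<subseteq> K \<and> K \<subseteq> (\<Union>p\<in>P. ball p \<eta>)"
    using seq_compact_imp_totally_bounded[OF compact_imp_seq_compact[OF \<open>compact K\<close>]] \<open>\<eta> > 0\<close>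
    by blast
  then obtain P where "finite P" "P \<subseteq> K" and cover: "K \<subseteq> (\<Union>p\<in>P. ball p \<eta>)"
    by blast
  have "\<forall>\<^sub>F n in sequentially. dist (f n p) (g p) < e / 3" if "p \<in> P" for p
    using tendstoD[OF lim[of p], of "e / 3"] that \<open>P \<subseteq> K\<close> \<open>e > 0\<close> by auto
  then have "\<forall>\<^sub>F n in sequentially. \<forall>p\<in>P. dist (f n p) (g p) < e / 3"
    using \<open>finite P\<close> by (simp add: eventually_ball_finite)
  then show "\<forall>\<^sub>F n in sequentially. \<forall>x\<in>K. dist (f n x) (g x) < e"
  proof (rule eventually_mono, intro ballI)
    fix n x assume net: "\<forall>p\<in>P. dist (f n p) (g p) < e / 3" and "x \<in> K"
    then obtain p where "p \<in> P" "dist p x < \<eta>"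
      using cover by auto
    then have "p \<in> K" and "dist (f n p) (g p) < e / 3"
      using \<open>P \<subseteq> K\<close> net by auto
    have "C * dist x p \<le> C * \<eta>" "C * dist p x \<le> C * \<eta>"
      using \<open>dist p x < \<eta>\<close> \<open>C \<ge> 0\<close> by (simp_all add: dist_commute mult_left_mono)
    then have "dist (f n x) (f n p) \<le> C * \<eta>" "dist (g p) (g x) \<le> C * \<eta>"
      using lipschitz_onD[OF f[of n] \<open>x \<in> K\<close> \<open>p \<in> K\<close>] lipschitz_onD[OF g \<open>p \<in> K\<close> \<open>x \<in> K\<close>]
      by simp_all
    moreover have "dist (f n x) (g x) \<le> dist (f n x) (f n p) + dist (f n p) (g p) + dist (g p) (g x)"
      using dist_triangle[of "f n x" "g x" "f n p"] dist_triangle[of "f n p" "g x" "g p"] by linarith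
    ultimately show "dist (f n x) (g x) < e"
      using \<open>dist (f n p) (g p) < e / 3\<close> C\<eta> by linarith
  qed
qed

lemma holder_continuous_imp_uniformly_continuous:
  assumes "holder_continuous f"
  shows "uniformly_continuous_on UNIV f"
proof -
  obtain C \<alpha> where C: "0 \<le> C" "0 < \<alpha>" and hf: "\<And>x y. norm (f x - f y) \<le> C * norm (x - y) powr \<alpha>"
    using assms unfolding holder_continuous_def by blast
  show ?thesis
    unfolding uniformly_continuous_on_def
  proof (intro allI impI)
    fix e :: real assume "e > 0"
    define \<delta> where "\<delta> = (e / (C + 1)) powr (1 / \<alpha>)"
    have "dist (f x') (f x) < e" if "dist x' x < \<delta>" for x x'
    proof -
      have "dist x' x powr \<alpha> < \<delta> powr \<alpha>"
        using that C(2) by (intro powr_less_mono2) auto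
      also have "\<delta> powr \<alpha> = e / (C + 1)"
        using \<open>e > 0\<close> C by (simp add: \<delta>_def powr_powr)
      finally have "(C + 1) * dist x' x powr \<alpha> < (C + 1) * (e / (C + 1))"
        using C(1) by (intro mult_strict_left_mono) auto
      then have "(C + 1) * dist x' x powr \<alpha> < e"
        using C(1) by simp
      moreover have "dist (f x') (f x) \<le> (C + 1) * dist x' x powr \<alpha>"
        using hf[of x' x] powr_ge_zero[of "norm (x' - x)" \<alpha>] unfolding dist_norm distrib_right
        by linarith
      ultimately show ?thesis
        by linarith
    qed
    moreover have "\<delta> > 0"
      using \<open>e > 0\<close> C by (simp add: \<delta>_def)
    ultimately show "\<exists>d>0. \<forall>x\<in>UNIV. \<forall>x'\<in>UNIV. dist x' x < d \<longrightarrow> dist (f x') (f x) < e"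
      by blast
  qed
qed

section \<open>Schauder bases and the basis constant\<close>

definition schauder_partial_sum :: "(nat \<Rightarrow> 'a::real_normed_vector) \<Rightarrow> nat \<Rightarrow> 'a \<Rightarrow> 'a" where
  "schauder_partial_sum b n x = (\<Sum>k<n. schauder_coeff b x k *\<^sub>R b k)"

definition schauder_norm :: "(nat \<Rightarrow> 'a::real_normed_vector) \<Rightarrow> 'a \<Rightarrow> real" where
  "schauder_norm b x = (SUP n. norm (schauder_partial_sum b n x))"

context
  fixes b :: "nat \<Rightarrow> 'a::banach"
  assumes basis: "schauder_basis b"
begin

lemma schauder_partial_sum_tendsto: "(\<lambda>n. schauder_partial_sum b n x) \<longlonglongrightarrow> x"
proof -
  have "\<exists>!\<beta>. (\<lambda>n. \<Sum>k<n. \<beta> k *\<^sub>R b k) \<longlonglongrightarrow> x"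
    using basis unfolding schauder_basis_def by blast
  from theI'[OF this] show ?thesis
    unfolding schauder_partial_sum_def schauder_coeff_def .
qed

lemma schauder_coeff_eqI:
  assumes "(\<lambda>n. \<Sum>k<n. a k *\<^sub>R b k) \<longlonglongrightarrow> x"
  shows "schauder_coeff b x = a"
proof -
  have "\<exists>!\<beta>. (\<lambda>n. \<Sum>k<n. \<beta> k *\<^sub>R b k) \<longlonglongrightarrow> x"
    using basis unfolding schauder_basis_def by blast
  then show ?thesis
    unfolding schauder_coeff_def using assms by (simp add: the1_equality)
qed

lemma schauder_partial_sum_coeff_eqI:
  assumes "(\<lambda>n. \<Sum>k<n. a k *\<^sub>R b k) \<longlonglongrightarrow> x"
  shows "schauder_partial_sum b n x = (\<Sum>k<n. a k *\<^sub>R b k)"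
  using schauder_coeff_eqI[OF assms] by (simp add: schauder_partial_sum_def)

lemma linear_schauder_coeff: "linear (\<lambda>x. schauder_coeff b x k)"
proof (rule linearI)
  let ?S = "schauder_partial_sum b"
  fix x y :: 'a and c :: real
  have "(\<lambda>n. ?S n x + ?S n y) \<longlonglongrightarrow> x + y"
    by (intro tendsto_add schauder_partial_sum_tendsto)
  then have "schauder_coeff b (x + y) = (\<lambda>k. schauder_coeff b x k + schauder_coeff b y k)"
    by (intro schauder_coeff_eqI) (simp add: schauder_partial_sum_def scaleR_add_left sum.distrib)
  then show "schauder_coeff b (x + y) k = schauder_coeff b x k + schauder_coeff b y k"
    by simp
  have "(\<lambda>n. c *\<^sub>R ?S n x) \<longlonglongrightarrow> c *\<^sub>R x"
    by (intro tendsto_scaleR tendsto_const schauder_partial_sum_tendsto)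
  then have "schauder_coeff b (c *\<^sub>R x) = (\<lambda>k. c * schauder_coeff b x k)"
    by (intro schauder_coeff_eqI) (simp add: schauder_partial_sum_def scaleR_sum_right)
  then show "schauder_coeff b (c *\<^sub>R x) k = c *\<^sub>R schauder_coeff b x k"
    by simp
qed

lemma linear_schauder_partial_sum: "linear (schauder_partial_sum b n)"
  by (rule linearI)
    (simp_all add: schauder_partial_sum_def linear_add[OF linear_schauder_coeff]
      linear_scale[OF linear_schauder_coeff] scaleR_add_left sum.distrib scaleR_sum_right)

lemma schauder_basis_nonzero: "b k \<noteq> 0"
proof
  assume "b k = 0"
  then have "(\<lambda>n. \<Sum>i<n. (if i = k then 1 else 0) *\<^sub>R b i) \<longlonglongrightarrow> 0"
    by (simp add: sum.neutral)
  then have "schauder_coeff b 0 = (\<lambda>i. if i = k then 1 else 0)"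
    by (rule schauder_coeff_eqI)
  moreover have "schauder_coeff b 0 = (\<lambda>_. 0)"
    by (rule schauder_coeff_eqI) simp
  ultimately show False
    by (metis zero_neq_one)
qed

lemma norm_schauder_partial_sum_le: "norm (schauder_partial_sum b n x) \<le> schauder_norm b x"
proof -
  have "bounded (range (\<lambda>n. schauder_partial_sum b n x))"
    using schauder_partial_sum_tendsto by (rule convergent_imp_bounded)
  then have "bdd_above (range (\<lambda>n. norm (schauder_partial_sum b n x)))"
    by (auto simp: bounded_iff bdd_above_def)
  then show ?thesis
    unfolding schauder_norm_def by (rule cSUP_upper[rotated]) simp
qed

lemma schauder_norm_le: "(\<And>n. norm (schauder_partial_sum b n x) \<le> c) \<Longrightarrow> schauder_norm b x \<le> c"
  unfolding schauder_norm_def by (rule cSUP_least) auto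

lemma norm_le_schauder_norm: "norm x \<le> schauder_norm b x"
proof -
  have "(\<lambda>n. norm (schauder_partial_sum b n x)) \<longlonglongrightarrow> norm x"
    by (intro tendsto_norm schauder_partial_sum_tendsto)
  then show ?thesis
    by (rule LIMSEQ_le_const2) (auto intro: norm_schauder_partial_sum_le)
qed

lemma schauder_norm_0 [simp]: "schauder_norm b 0 = 0"
  using linear_0[OF linear_schauder_partial_sum]
  by (metis antisym norm_le_schauder_norm norm_zero order_refl schauder_norm_le)

lemma schauder_norm_diff: "schauder_norm b (x - y) \<le> schauder_norm b x + schauder_norm b y"
  by (rule schauder_norm_le)
    (metis linear_diff[OF linear_schauder_partial_sum] add_mono norm_triangle_ineq4 order_trans
      norm_schauder_partial_sum_le)

lemma schauder_norm_scaleR: "schauder_norm b (c *\<^sub>R x) \<le> \<bar>c\<bar> * schauder_norm b x"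
  by (rule schauder_norm_le)
    (simp add: linear_scale[OF linear_schauder_partial_sum] mult_left_mono
      norm_schauder_partial_sum_le)

lemma abs_schauder_coeff_le: "\<bar>schauder_coeff b x k\<bar> * norm (b k) \<le> 2 * schauder_norm b x"
proof -
  have "\<bar>schauder_coeff b x k\<bar> * norm (b k) =
      norm (schauder_partial_sum b (Suc k) x - schauder_partial_sum b k x)"
    by (simp add: schauder_partial_sum_def)
  also have "\<dots> \<le> 2 * schauder_norm b x"
    using norm_triangle_ineq4 norm_schauder_partial_sum_le
    by (smt (verit, ccfv_threshold))
  finally show ?thesis .
qed

lemma schauder_norm_suminf_le:
  assumes le: "\<And>i. schauder_norm b (xs i) \<le> c i" and c: "summable c"
    and y: "(\<lambda>I. \<Sum>i<I. xs i) \<longlonglongrightarrow> y"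
  shows "schauder_norm b y \<le> suminf c"
proof -
  let ?S = "schauder_partial_sum b"
  have S_le: "norm (?S n (xs i)) \<le> c i" for n i
    using norm_schauder_partial_sum_le le order_trans by blast
  have S_summable: "summable (\<lambda>i. ?S n (xs (i + I)))" for n I
    using summable_ignore_initial_segment[OF c] S_le by (rule summable_comparison_test')
  define T where "T n = (\<Sum>i. ?S n (xs i))" for n
  define a where "a k = (\<Sum>i. schauder_coeff b (xs i) k)" for k
  have "summable (\<lambda>i. schauder_coeff b (xs i) k)" for k
  proof (rule summable_comparison_test')
    show "summable (\<lambda>i. 2 * c i / norm (b k))"
      using c by (intro summable_divide summable_mult)
    show "norm (schauder_coeff b (xs i) k) \<le> 2 * c i / norm (b k)" for i
      using abs_schauder_coeff_le[of "xs i" k] le[of i] schauder_basis_nonzero[of k]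
      by (simp add: field_simps)
  qed
  then have T_eq: "T n = (\<Sum>k<n. a k *\<^sub>R b k)" for n
    by (simp add: T_def a_def schauder_partial_sum_def suminf_sum summable_scaleR_left
        suminf_scaleR_left)
  have "T \<longlonglongrightarrow> y"
  proof (rule LIMSEQ_I)
    fix e :: real assume "e > 0"
    then have "e / 3 > 0" by simp
    obtain I1 where tail: "\<And>I. I \<ge> I1 \<Longrightarrow> norm (\<Sum>i. c (i + I)) < e / 3"
      using suminf_exist_split[OF \<open>e / 3 > 0\<close> c] by blast
    obtain I2 where head: "\<And>I. I \<ge> I2 \<Longrightarrow> norm ((\<Sum>i<I. xs i) - y) < e / 3"
      using LIMSEQ_D[OF y \<open>e / 3 > 0\<close>] by blast
    define I where "I = max I1 I2"
    let ?P = "\<Sum>i<I. xs i"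
    obtain n0 where n0: "\<And>n. n \<ge> n0 \<Longrightarrow> norm (?S n ?P - ?P) < e / 3"
      using LIMSEQ_D[OF schauder_partial_sum_tendsto \<open>e / 3 > 0\<close>] by blast
    show "\<exists>n0. \<forall>n\<ge>n0. norm (T n - y) < e"
    proof (intro exI allI impI)
      fix n assume "n \<ge> n0"
      have "T n - ?S n ?P = (\<Sum>i. ?S n (xs (i + I)))"
        using suminf_split_initial_segment[OF S_summable[of n 0], of I]
        by (simp add: T_def linear_sum[OF linear_schauder_partial_sum])
      also have "norm \<dots> \<le> (\<Sum>i. c (i + I))"
        using S_le summable_ignore_initial_segment[OF c] by (rule norm_suminf_le)
      finally have "norm (T n - ?S n ?P) < e / 3"
        using tail[of I] by (simp add: I_def)
      moreover have "norm (T n - y) \<le> norm (T n - ?S n ?P) + norm (?S n ?P - ?P) + norm (?P - y)"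
        using order_trans[OF norm_triangle_ineq add_right_mono[OF norm_triangle_ineq]]
        by (metis diff_add_cancel add_diff_eq)
      ultimately show "norm (T n - y) < e"
        using n0[OF \<open>n \<ge> n0\<close>] head[of I] by (simp add: I_def)
    qed
  qed
  then have "?S n y = T n" for n
    unfolding T_eq by (rule schauder_partial_sum_coeff_eqI)
  moreover have "norm (T n) \<le> suminf c" for n
    unfolding T_def using S_le c by (rule norm_suminf_le)
  ultimately show ?thesis
    by (intro schauder_norm_le) simp
qed

lemma schauder_norm_sublevel_closure_ball:
  obtains m :: nat and x0 r where "r > 0" "ball x0 r \<subseteq> closure {x. schauder_norm b x \<le> m}"
proof -
  let ?A = "\<lambda>m::nat. closure {x. schauder_norm b x \<le> m}"
  have "x \<in> ?A (nat \<lceil>schauder_norm b x\<rceil>)" for x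
  proof -
    have "schauder_norm b x \<le> real (nat \<lceil>schauder_norm b x\<rceil>)"
      by (rule real_nat_ceiling_ge)
    then show ?thesis
      using closure_subset by fastforce
  qed
  then have "\<Union>(range ?A) = UNIV"
    by blast
  then have "euclidean interior_of \<Union>(range ?A) \<noteq> {}"
    by (simp add: euclidean_interior_of)
  then obtain m where "interior (?A m) \<noteq> {}"
    using Baire_category_alt[OF disjI1[OF completely_metrizable_space_euclidean], of "range ?A"]
    by (auto simp: closed_closedin[symmetric])
  then obtain x0 where "x0 \<in> interior (?A m)"
    by blast
  then show ?thesis
    using that unfolding mem_interior by blast
qed

lemma schauder_norm_approx_bound:
  obtains D where "D \<ge> 0" "\<And>y \<eta>. \<eta> > 0 \<Longrightarrow> \<exists>x. schauder_norm b x \<le> D * norm y \<and> norm (y - x) < \<eta>"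
proof -
  obtain m :: nat and x0 r where r: "r > 0" and ball: "ball x0 r \<subseteq> closure {x. schauder_norm b x \<le> m}"
    using schauder_norm_sublevel_closure_ball by blast
  have near: "\<exists>x. schauder_norm b x \<le> m \<and> norm (x - z) < \<eta>" if "z \<in> ball x0 r" "\<eta> > 0" for z \<eta>
  proof -
    have "z \<in> closure {x. schauder_norm b x \<le> m}"
      using that(1) ball by blast
    then show ?thesis
      using that(2) by (auto simp: closure_approachable dist_norm)
  qed
  have small: "\<exists>x. schauder_norm b x \<le> 2 * m \<and> norm (y - x) < \<eta>"
    if y: "norm y < r" and \<eta>: "\<eta> > 0" for y \<eta>
  proof -
    have "x0 + y \<in> ball x0 r"
      using y by (simp add: dist_norm)
    then obtain u where u: "schauder_norm b u \<le> m" "norm (u - (x0 + y)) < \<eta> / 2"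
      using near[of "x0 + y" "\<eta> / 2"] \<eta> by auto
    obtain v where v: "schauder_norm b v \<le> m" "norm (v - x0) < \<eta> / 2"
      using near[of x0 "\<eta> / 2"] \<eta> r by auto
    have "y - (u - v) = (v - x0) - (u - (x0 + y))"
      by (simp add: algebra_simps)
    then have "norm (y - (u - v)) \<le> norm (v - x0) + norm (u - (x0 + y))"
      by (metis norm_triangle_ineq4)
    then have "norm (y - (u - v)) < \<eta>"
      using u(2) v(2) by linarith
    moreover have "schauder_norm b (u - v) \<le> 2 * m"
      using schauder_norm_diff[of u v] u(1) v(1) by simp
    ultimately show ?thesis by blast
  qed
  show ?thesis
  proof
    show "4 * m / r \<ge> 0" using r by simp
    fix y :: 'a and \<eta> :: real assume "\<eta> > 0"
    show "\<exists>x. schauder_norm b x \<le> 4 * m / r * norm y \<and> norm (y - x) < \<eta>"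
    proof (cases "y = 0")
      case True
      then show ?thesis using \<open>\<eta> > 0\<close> by (intro exI[of _ 0]) simp
    next
      case False
      define s where "s = r / (2 * norm y)"
      have s: "s > 0" "norm (s *\<^sub>R y) < r"
        using r False by (simp_all add: s_def)
      then obtain x where x: "schauder_norm b x \<le> 2 * m" "norm (s *\<^sub>R y - x) < s * \<eta>"
        using small[of "s *\<^sub>R y" "s * \<eta>"] \<open>\<eta> > 0\<close> by auto
      have "schauder_norm b (x /\<^sub>R s) \<le> inverse s * schauder_norm b x"
        using schauder_norm_scaleR[of "inverse s" x] s(1) by simp
      also have "\<dots> \<le> inverse s * (2 * m)"
        using x(1) s(1) by (intro mult_left_mono) auto
      also have "\<dots> = 4 * m / r * norm y"
        using r False by (simp add: s_def field_simps)
      finally have "schauder_norm b (x /\<^sub>R s) \<le> 4 * m / r * norm y" .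
      moreover have "norm (y - x /\<^sub>R s) < \<eta>"
      proof -
        have "y - x /\<^sub>R s = inverse s *\<^sub>R (s *\<^sub>R y - x)"
          using s(1) by (simp add: algebra_simps)
        then have "norm (y - x /\<^sub>R s) = inverse s * norm (s *\<^sub>R y - x)"
          using s(1) by simp
        also have "\<dots> < inverse s * (s * \<eta>)"
          using x(2) s(1) by (intro mult_strict_left_mono) auto
        also have "\<dots> = \<eta>"
          using s(1) by simp
        finally show ?thesis .
      qed
      ultimately show ?thesis by blast
    qed
  qed
qed

text \<open>Finiteness of the basis constant, by the open-mapping iteration: approximate the remainder
  with error halving at each step and sum the approximations termwise.\<close>

lemma schauder_norm_bounded:
  obtains C where "C \<ge> 0" "\<And>x. schauder_norm b x \<le> C * norm x"
proof -
  obtain D where D: "D \<ge> 0" "\<And>y \<eta>. \<eta> > 0 \<Longrightarrow> \<exists>x. schauder_norm b x \<le> D * norm y \<and> norm (y - x) < \<eta>"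
    using schauder_norm_approx_bound by blast
  then have "\<forall>y \<eta>. \<exists>x. \<eta> > 0 \<longrightarrow> schauder_norm b x \<le> D * norm y \<and> norm (y - x) < \<eta>"
    by blast
  then obtain A where A: "\<And>y \<eta>. \<eta> > 0 \<Longrightarrow> schauder_norm b (A y \<eta>) \<le> D * norm y \<and> norm (y - A y \<eta>) < \<eta>"
    by metis
  have "schauder_norm b y \<le> 2 * D * norm y" for y
  proof (cases "y = 0")
    case False
    define t where "t = norm y"
    have t: "t > 0" using False by (simp add: t_def)
    define R where "R = rec_nat y (\<lambda>i z. z - A z (t / 2 ^ Suc i))"
    have R0: "R 0 = y" and RS: "R (Suc i) = R i - A (R i) (t / 2 ^ Suc i)" for i
      by (simp_all add: R_def)
    define xs where "xs i = A (R i) (t / 2 ^ Suc i)" for i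
    have R_le: "norm (R i) \<le> t / 2 ^ i" for i
    proof (cases i)
      case (Suc j)
      have "norm (R (Suc j)) < t / 2 ^ Suc j"
        unfolding RS using A[of "t / 2 ^ Suc j" "R j"] t by simp
      then show ?thesis
        using Suc by simp
    qed (simp add: R0 t_def)
    have xs_le: "schauder_norm b (xs i) \<le> D * t * (1/2) ^ i" for i
    proof -
      have "schauder_norm b (xs i) \<le> D * norm (R i)"
        unfolding xs_def using A[of "t / 2 ^ Suc i" "R i"] t by simp
      also have "\<dots> \<le> D * (t / 2 ^ i)"
        using R_le[of i] D(1) by (rule mult_left_mono)
      finally show ?thesis by (simp add: power_one_over)
    qed
    have "(\<lambda>j. t / 2 ^ j) \<longlonglongrightarrow> 0"
      by (intro LIMSEQ_divide_realpow_zero) auto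
    moreover have "\<forall>\<^sub>F j in sequentially. norm (R j) \<le> t / 2 ^ j"
      using R_le by (intro always_eventually) blast
    ultimately have "R \<longlonglongrightarrow> 0"
      by (rule Lim_null_comparison[rotated])
    moreover have "(\<Sum>i<j. xs i) = y - R j" for j
      by (induction j) (simp_all add: R0 RS xs_def)
    ultimately have "(\<lambda>j. \<Sum>i<j. xs i) \<longlonglongrightarrow> y"
      using tendsto_diff[OF tendsto_const[of y]] by fastforce
    then have "schauder_norm b y \<le> (\<Sum>i. D * t * (1/2) ^ i)"
      using xs_le by (intro schauder_norm_suminf_le) (simp_all add: summable_geometric)
    also have "\<dots> = 2 * D * norm y"
      by (simp add: suminf_mult suminf_geometric summable_geometric t_def)
    finally show ?thesis .
  qed simp
  then show ?thesis
    using that D(1) by (metis mult_nonneg_nonneg zero_le_numeral)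
qed

end

context
  fixes b :: "nat \<Rightarrow> 'a::banach"
  assumes basis: "schauder_basis b"
begin

lemma schauder_partial_sum_lipschitz:
  obtains C where "\<And>n. C-lipschitz_on UNIV (schauder_partial_sum b n)"
proof -
  obtain C where "C \<ge> 0" and C: "\<And>x. schauder_norm b x \<le> C * norm x"
    using schauder_norm_bounded[OF basis] by blast
  have "norm (schauder_partial_sum b n x - schauder_partial_sum b n y) \<le> C * norm (x - y)" for n x y
    using norm_schauder_partial_sum_le[OF basis, of n "x - y"] C[of "x - y"]
    by (simp add: linear_diff[OF linear_schauder_partial_sum[OF basis]])
  then show ?thesis
    using \<open>C \<ge> 0\<close> by (intro that lipschitz_onI) (simp_all add: dist_norm)
qed

lemma uniform_limit_schauder_partial_sum:
  assumes "compact K"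
  shows "uniform_limit K (schauder_partial_sum b) (\<lambda>x. x) sequentially"
proof -
  obtain C where C: "\<And>n. C-lipschitz_on UNIV (schauder_partial_sum b n)"
    using schauder_partial_sum_lipschitz by blast
  have "(max C 1)-lipschitz_on K (schauder_partial_sum b n)" for n
    using C by (rule lipschitz_on_mono) simp_all
  moreover have "(max C 1)-lipschitz_on K (\<lambda>x. x)"
    by (rule lipschitz_on_le[OF lipschitz_on_id]) simp
  ultimately show ?thesis
    using assms schauder_partial_sum_tendsto[OF basis]
    by (intro uniform_limit_equi_lipschitz_compact) auto
qed

lemma bounded_linear_schauder_coeff: "bounded_linear (\<lambda>x. schauder_coeff b x k)"
proof -
  obtain C where "C \<ge> 0" and C: "\<And>x. schauder_norm b x \<le> C * norm x"
    using schauder_norm_bounded[OF basis] by blast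
  have "norm (schauder_coeff b x k) \<le> norm x * (2 * C / norm (b k))" for x
    using abs_schauder_coeff_le[OF basis, of x k] C[of x] schauder_basis_nonzero[OF basis, of k]
    by (simp add: field_simps)
  then show ?thesis
    by (intro bounded_linear_intro[where K = "2 * C / norm (b k)"])
      (simp_all add: linear_add[OF linear_schauder_coeff[OF basis]]
        linear_scale[OF linear_schauder_coeff[OF basis]])
qed

lemma compact_schauder_coeff_image:
  assumes "compact K"
  shows "compact ((\<lambda>x k. if k < n then schauder_coeff b x k else 0) ` K)"
proof (rule compact_continuous_image[OF _ assms])
  show "continuous_on K (\<lambda>x k. if k < n then schauder_coeff b x k else 0)"
  proof (intro continuous_on_coordinatewise_then_product)
    fix k
    show "continuous_on K (\<lambda>x. if k < n then schauder_coeff b x k else 0)"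
      using linear_continuous_on[OF bounded_linear_schauder_coeff, of K k] by (cases "k < n") auto
  qed
qed

end

lemma enorm_le_iff: "enorm N x \<le> enorm N y \<longleftrightarrow> (\<Sum>i<N. (x i)\<^sup>2) \<le> (\<Sum>i<N. (y i)\<^sup>2)"
  unfolding enorm_def by (simp add: sum_nonneg)

lemma abs_le_enorm:
  assumes "i < n"
  shows "\<bar>v i\<bar> \<le> enorm n v"
proof -
  have "(v i)\<^sup>2 \<le> (\<Sum>k<n. (v k)\<^sup>2)"
    using assms by (intro member_le_sum) auto
  then have "sqrt ((v i)\<^sup>2) \<le> enorm n v"
    unfolding enorm_def by (rule real_sqrt_le_mono)
  then show ?thesis
    by simp
qed

lemma enorm_le_of_abs_le:
  assumes "\<And>i. i < N \<Longrightarrow> \<bar>v i\<bar> \<le> M"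
  shows "enorm N v \<le> sqrt N * M"
proof -
  have "(\<Sum>i<N. (v i)\<^sup>2) \<le> (\<Sum>i<N. M\<^sup>2)"
  proof (intro sum_mono)
    fix i assume "i \<in> {..<N}"
    then have "\<bar>v i\<bar>\<^sup>2 \<le> M\<^sup>2"
      using assms by (intro power_mono) auto
    then show "(v i)\<^sup>2 \<le> M\<^sup>2"
      by simp
  qed
  then have "enorm N v \<le> sqrt (N * M\<^sup>2)"
    unfolding enorm_def by (simp add: real_sqrt_le_mono)
  also have "\<dots> \<le> sqrt N * M"
  proof (cases "N = 0")
    case False
    then have "0 \<le> M"
      using assms[of 0] by simp
    then show ?thesis by (simp add: real_sqrt_mult)
  qed simp
  finally show ?thesis .
qed

lemma norm_sum_scaleR_le_enorm:
  fixes b :: "nat \<Rightarrow> 'a::real_normed_vector"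
  shows "norm (\<Sum>k<n. v k *\<^sub>R b k) \<le> (\<Sum>k<n. norm (b k)) * enorm n v"
proof -
  have "norm (\<Sum>k<n. v k *\<^sub>R b k) \<le> (\<Sum>k<n. \<bar>v k\<bar> * norm (b k))"
    using norm_sum[of "\<lambda>k. v k *\<^sub>R b k"] by simp
  also have "\<dots> \<le> (\<Sum>k<n. enorm n v * norm (b k))"
    using abs_le_enorm by (intro sum_mono mult_right_mono) auto
  finally show ?thesis
    by (simp add: sum_distrib_left mult.commute)
qed

lemma modulus_linear: "W \<ge> 0 \<Longrightarrow> modulus (\<lambda>t. W * t)"
  unfolding modulus_def mono_on_def
  by (auto intro!: continuous_on_mult_left continuous_on_id mult_left_mono)

lemma universal_approximator_approx:
  assumes "universal_approximator F" "modulus \<omega>" "unif_cont_mod \<omega> n m g"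
    and "compact K" "K \<subseteq> euclid n" "e > 0"
  shows "\<exists>c. \<exists>h\<in>F n m c. \<forall>v\<in>K. enorm m (g v - h v) < e"
proof -
  have "\<exists>r. (\<forall>\<omega> K n m. r \<omega> K n m \<longlonglongrightarrow> 0) \<and>
      (\<forall>\<omega> n m g K c. modulus \<omega> \<longrightarrow> unif_cont_mod \<omega> n m g \<longrightarrow> compact K \<longrightarrow>
        K \<subseteq> euclid n \<longrightarrow> (\<exists>h\<in>F n m c. \<forall>v\<in>K. enorm m (g v - h v) \<le> r \<omega> K n m c))"
    using assms(1) unfolding universal_approximator_def by (elim conjE exE) blast
  then obtain r where r_lim: "\<forall>\<omega> K n m. r \<omega> K n m \<longlonglongrightarrow> 0"
    and r_approx: "\<forall>\<omega> n m g K c. modulus \<omega> \<longrightarrow> unif_cont_mod \<omega> n m g \<longrightarrow> compact K \<longrightarrow>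
      K \<subseteq> euclid n \<longrightarrow> (\<exists>h\<in>F n m c. \<forall>v\<in>K. enorm m (g v - h v) \<le> r \<omega> K n m c)"
    by (elim exE conjE)
  obtain c where c: "r \<omega> K n m c < e"
    using eventually_sequentially_ex_ge[OF order_tendstoD(2)[OF r_lim[rule_format] \<open>e > 0\<close>]]
    by blast
  obtain h where "h \<in> F n m c" and h: "\<forall>v\<in>K. enorm m (g v - h v) \<le> r \<omega> K n m c"
    using r_approx[rule_format, OF assms(2-5)] by blast
  moreover have "enorm m (g v - h v) < e" if "v \<in> K" for v
    using h that c by fastforce
  ultimately show ?thesis
    by blast
qed

section \<open>Projection onto the simplex\<close>

text \<open>The inequality behind the threshold formula: it is the optimality condition at
  \<open>w = max (u - \<tau>) 0\<close> for the Lagrangian with multiplier \<open>\<tau>\<close> of the constraint \<open>\<Sum> w = 1\<close>.\<close>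

lemma sq_diff_ge_threshold:
  fixes u v \<tau> :: real
  assumes "0 \<le> v"
  shows "(u - v)\<^sup>2 \<ge> (u - max (u - \<tau>) 0)\<^sup>2 + 2 * \<tau> * (max (u - \<tau>) 0 - v) + (max (u - \<tau>) 0 - v)\<^sup>2"
proof (cases "u > \<tau>")
  case True
  then show ?thesis by (simp add: power2_eq_square algebra_simps)
next
  case False
  then have "u * v \<le> \<tau> * v" using assms by (intro mult_right_mono) auto
  then show ?thesis using False by (simp add: power2_eq_square algebra_simps)
qed

lemma proj_simplex_threshold:
  assumes \<tau>: "(\<Sum>i<N. max (u i - \<tau>) 0) = 1"
  shows "proj_simplex N u = (\<lambda>i. if i < N then max (u i - \<tau>) 0 else 0)"
proof -
  define w where "w i = (if i < N then max (u i - \<tau>) 0 else 0)" for i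
  have sum_w: "(\<Sum>i<N. w i) = 1"
    using \<tau> by (simp add: w_def)
  have "w i \<le> 1" if "i < N" for i
    using member_le_sum[of i "{..<N}" w] that sum_w by (simp add: w_def)
  then have w: "w \<in> prob_simplex N"
    using sum_w by (auto simp: prob_simplex_def euclid_def w_def)
  have pythagoras: "(\<Sum>i<N. (u i - w i)\<^sup>2) + (\<Sum>i<N. (w i - v i)\<^sup>2) \<le> (\<Sum>i<N. (u i - v i)\<^sup>2)"
    if v: "v \<in> prob_simplex N" for v
  proof -
    have "(\<Sum>i<N. (u i - w i)\<^sup>2 + 2 * \<tau> * (w i - v i) + (w i - v i)\<^sup>2) \<le> (\<Sum>i<N. (u i - v i)\<^sup>2)"
      using v by (intro sum_mono) (simp add: w_def prob_simplex_def sq_diff_ge_threshold)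
    moreover have "(\<Sum>i<N. (u i - w i)\<^sup>2 + 2 * \<tau> * (w i - v i) + (w i - v i)\<^sup>2) =
        (\<Sum>i<N. (u i - w i)\<^sup>2) + 2 * \<tau> * ((\<Sum>i<N. w i) - (\<Sum>i<N. v i)) + (\<Sum>i<N. (w i - v i)\<^sup>2)"
      by (simp add: sum.distrib sum_distrib_left sum_subtractf algebra_simps)
    moreover have "(\<Sum>i<N. v i) = 1"
      using v by (simp add: prob_simplex_def)
    ultimately show ?thesis
      using sum_w by simp
  qed
  have minimal: "enorm N (u - w) \<le> enorm N (u - v)" if "v \<in> prob_simplex N" for v
  proof -
    have "0 \<le> (\<Sum>i<N. (w i - v i)\<^sup>2)"
      by (simp add: sum_nonneg)
    then show ?thesis
      using pythagoras[OF that] by (simp add: enorm_le_iff)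
  qed
  have unique: "w' = w" if w': "w' \<in> prob_simplex N" "enorm N (u - w') \<le> enorm N (u - w)" for w'
  proof
    fix i
    have "0 \<le> (\<Sum>i<N. (w i - w' i)\<^sup>2)"
      by (simp add: sum_nonneg)
    then have "(\<Sum>i<N. (w i - w' i)\<^sup>2) = 0"
      using pythagoras[OF w'(1)] w'(2) by (simp add: enorm_le_iff)
    then have "i < N \<Longrightarrow> w' i = w i"
      by (simp add: sum_nonneg_eq_0_iff)
    then show "w' i = w i"
      using w'(1) by (cases "i < N") (auto simp: prob_simplex_def euclid_def w_def)
  qed
  have "proj_simplex N u = w"
    unfolding proj_simplex_def
  proof (rule the_equality)
    show "w \<in> prob_simplex N \<and> (\<forall>v\<in>prob_simplex N. enorm N (u - w) \<le> enorm N (u - v))"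
      using w minimal by blast
  next
    fix w' assume "w' \<in> prob_simplex N \<and> (\<forall>v\<in>prob_simplex N. enorm N (u - w') \<le> enorm N (u - v))"
    then show "w' = w"
      using w unique by blast
  qed
  then show ?thesis
    by (simp add: w_def fun_eq_iff)
qed

lemma proj_simplex_threshold_exists:
  fixes u :: "nat \<Rightarrow> real"
  assumes "N \<ge> 1"
  obtains \<tau> where "(\<Sum>i<N. max (u i - \<tau>) 0) = 1" "\<And>i. i < N \<Longrightarrow> u i - 1 \<le> \<tau>"
proof -
  define M where "M = Max (u ` {..<N})"
  have "u ` {..<N} \<noteq> {}"
    using assms by (auto simp: lessThan_empty_iff)
  then have "M \<in> u ` {..<N}"
    unfolding M_def by (intro Max_in) auto
  then obtain i0 where "i0 < N" "u i0 = M"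
    by auto
  have M: "u i \<le> M" if "i < N" for i
    unfolding M_def using that by (intro Max_ge) auto
  define h where "h \<tau> = (\<Sum>i<N. max (u i - \<tau>) 0)" for \<tau>
  have "h M \<le> 1"
    using M by (simp add: h_def max_def)
  moreover have "1 \<le> h (M - 1)"
    using member_le_sum[of i0 "{..<N}" "\<lambda>i. max (u i - (M - 1)) 0"] \<open>i0 < N\<close> \<open>u i0 = M\<close>
    by (simp add: h_def)
  moreover have "isCont h x" for x
    unfolding h_def by (intro continuous_intros)
  ultimately obtain \<tau> where "M - 1 \<le> \<tau>" "h \<tau> = 1"
    using IVT2[of h M 1 "M - 1"] by auto
  then show ?thesis
    using that M by (force simp: h_def)
qed

lemma proj_simplex_in_prob_simplex: "N \<ge> 1 \<Longrightarrow> proj_simplex N u \<in> prob_simplex N"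
proof -
  assume "N \<ge> 1"
  then obtain \<tau> where \<tau>: "(\<Sum>i<N. max (u i - \<tau>) 0) = 1"
    using proj_simplex_threshold_exists by blast
  have "max (u i - \<tau>) 0 \<le> 1" if "i < N" for i
    using member_le_sum[of i "{..<N}" "\<lambda>i. max (u i - \<tau>) 0"] that \<tau> by simp
  then show ?thesis
    using \<tau> by (simp add: proj_simplex_threshold[OF \<tau>] prob_simplex_def euclid_def)
qed

lemma proj_simplex_support:
  assumes "N \<ge> 1" "i < N" "j < N" "proj_simplex N u j \<noteq> 0"
  shows "u i - 1 \<le> u j"
proof -
  obtain \<tau> where \<tau>: "(\<Sum>i<N. max (u i - \<tau>) 0) = 1" "\<And>i. i < N \<Longrightarrow> u i - 1 \<le> \<tau>"
    using proj_simplex_threshold_exists[OF assms(1)] by blast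
  have "u j > \<tau>"
    using assms(3,4) by (auto simp: proj_simplex_threshold[OF \<tau>(1)] max_def split: if_splits)
  then show ?thesis
    using \<tau>(2)[OF assms(2)] by linarith
qed

lemma proj_simplex_support_near:
  assumes "N \<ge> 1" "L > 0" "i < N" "j < N" "proj_simplex N h j \<noteq> 0"
    and h: "\<And>j. j < N \<Longrightarrow> \<bar>h j + L * d j\<bar> < 1/4"
  shows "d j < d i + 3 / (2 * L)"
proof -
  have "h i - 1 \<le> h j"
    using proj_simplex_support[OF assms(1,3,4,5)] .
  then have "L * d j < L * d i + 3 / 2"
    using h[OF assms(3)] h[OF assms(4)] abs_less_iff[of "h i + L * d i" "1/4"]
      abs_less_iff[of "h j + L * d j" "1/4"]
    by linarith
  then show ?thesis
    using assms(2) by (simp add: field_simps)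
qed

section \<open>The approximating operator\<close>

lemma unif_cont_mod_neg_dist:
  fixes b p :: "nat \<Rightarrow> 'a::real_normed_vector"
  assumes "L \<ge> 0"
  shows "unif_cont_mod (\<lambda>t. sqrt N * L * (\<Sum>k<n. norm (b k)) * t) n N
    (\<lambda>v j. if j < N then - L * norm ((\<Sum>k<n. v k *\<^sub>R b k) - p j) else 0)"
proof -
  let ?u = "\<lambda>v. \<Sum>k<n. v k *\<^sub>R b k"
  let ?g = "\<lambda>v j. if j < N then - L * norm (?u v - p j) else 0"
  have "\<bar>- L * norm (?u v - p j) - - L * norm (?u v' - p j)\<bar> \<le> L * (\<Sum>k<n. norm (b k)) * enorm n (v - v')"
    for v v' j
  proof -
    have "\<bar>norm (?u v - p j) - norm (?u v' - p j)\<bar> \<le> norm (?u v - ?u v')"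
      using norm_triangle_ineq3[of "?u v - p j" "?u v' - p j"] by simp
    also have "?u v - ?u v' = (\<Sum>k<n. (v - v') k *\<^sub>R b k)"
      by (simp add: scaleR_diff_left sum_subtractf)
    also have "norm \<dots> \<le> (\<Sum>k<n. norm (b k)) * enorm n (v - v')"
      by (rule norm_sum_scaleR_le_enorm)
    finally have "L * \<bar>norm (?u v - p j) - norm (?u v' - p j)\<bar> \<le> L * ((\<Sum>k<n. norm (b k)) * enorm n (v - v'))"
      using assms by (rule mult_left_mono)
    then show ?thesis
      using assms by (simp add: abs_mult mult.assoc abs_minus_commute flip: right_diff_distrib)
  qed
  then have "enorm N (?g v - ?g v') \<le> sqrt N * (L * (\<Sum>k<n. norm (b k)) * enorm n (v - v'))" for v v'
    by (intro enorm_le_of_abs_le) simp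
  then show ?thesis
    unfolding unif_cont_mod_def euclid_def by (simp add: mult.assoc)
qed

lemma norm_convex_combination_diff_le:
  assumes w: "w \<in> prob_simplex N" and y: "\<And>j. j < N \<Longrightarrow> w j \<noteq> 0 \<Longrightarrow> norm (y j - a) \<le> \<delta>"
  shows "norm ((\<Sum>j<N. w j *\<^sub>R y j) - a) \<le> \<delta>"
proof -
  have w0: "\<And>j. j < N \<Longrightarrow> 0 \<le> w j" and w1: "(\<Sum>j<N. w j) = 1"
    using w by (auto simp: prob_simplex_def)
  have "(\<Sum>j<N. w j *\<^sub>R y j) - a = (\<Sum>j<N. w j *\<^sub>R (y j - a))"
    using w1 by (simp add: scaleR_diff_right sum_subtractf flip: scaleR_sum_left)
  also have "norm \<dots> \<le> (\<Sum>j<N. w j * \<delta>)"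
    using norm_sum[of "\<lambda>j. w j *\<^sub>R (y j - a)" "{..<N}"]
  proof (rule order_trans)
    show "(\<Sum>j<N. norm (w j *\<^sub>R (y j - a))) \<le> (\<Sum>j<N. w j * \<delta>)"
      using w0 y by (intro sum_mono) (fastforce intro: mult_left_mono)
  qed
  also have "\<dots> = \<delta>"
    using w1 by (simp flip: sum_distrib_right)
  finally show ?thesis .
qed

lemma proj_simplex_weighted_net_approx:
  fixes f :: "'a::real_normed_vector \<Rightarrow> 'b::real_normed_vector"
  assumes "N \<ge> 1" "\<rho> > 0"
    and f: "\<And>x'. norm (x - x') < \<rho> \<Longrightarrow> norm (f x - f x') < \<epsilon> / 4"
    and s: "norm (x - s) < \<rho> / 4"
    and net: "j0 < N" "norm (x - p j0) < \<rho> / 4"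
    and h: "\<And>j. j < N \<Longrightarrow> \<bar>h j + 6 / \<rho> * norm (s - p j)\<bar> < 1/4"
    and y: "\<And>j. j < N \<Longrightarrow> norm (y j - f (p j)) < \<epsilon> / 4"
  shows "norm ((\<Sum>j<N. proj_simplex N h j *\<^sub>R y j) - f x) \<le> \<epsilon> / 2"
proof (rule norm_convex_combination_diff_le)
  show "proj_simplex N h \<in> prob_simplex N"
    using \<open>N \<ge> 1\<close> by (rule proj_simplex_in_prob_simplex)
  fix j assume "j < N" "proj_simplex N h j \<noteq> 0"
  then have "norm (s - p j) < norm (s - p j0) + 3 / (2 * (6 / \<rho>))"
    using proj_simplex_support_near[OF \<open>N \<ge> 1\<close> _ net(1), of "6 / \<rho>" j h "\<lambda>j. norm (s - p j)"]
      \<open>\<rho> > 0\<close> h by simp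
  moreover have "norm (s - p j0) \<le> norm (x - s) + norm (x - p j0)"
    using norm_triangle_ineq4[of "x - p j0" "x - s"] by simp
  moreover have "norm (x - p j) \<le> norm (x - s) + norm (s - p j)"
    using norm_triangle_ineq[of "x - s" "s - p j"] by simp
  ultimately have "norm (x - p j) < \<rho>"
    using s net(2) by simp
  then have "norm (f x - f (p j)) < \<epsilon> / 4"
    by (rule f)
  then show "norm (y j - f x) \<le> \<epsilon> / 2"
    using y[OF \<open>j < N\<close>] norm_triangle_ineq[of "y j - f (p j)" "f (p j) - f x"]
    by (simp add: norm_minus_commute)
qed

theorem mainTheorem13:
  fixes xb :: "nat \<Rightarrow> 'a::banach" and yb :: "nat \<Rightarrow> 'b::banach"
    and f :: "'a \<Rightarrow> 'b"
    and F :: "nat \<Rightarrow> nat \<Rightarrow> nat \<Rightarrow> ((nat \<Rightarrow> real) \<Rightarrow> (nat \<Rightarrow> real)) set"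
  assumes "infinite_dimensional TYPE('a)" and "infinite_dimensional TYPE('b)"
    and "schauder_basis xb" and "schauder_basis yb"
    and "holder_continuous f"
    and "universal_approximator F"
    and "\<epsilon> > 0" and "compact K"
  shows "\<exists>n N q fh z. n \<ge> 1 \<and> N \<ge> 1 \<and> q \<ge> 1 \<and> fh \<in> (\<Union>c. F n N c) \<and>
    (\<exists>\<delta><\<epsilon>. \<forall>x\<in>K.
       norm ((\<Sum>j<N. \<Sum>i<q.
               (proj_simplex N (fh (\<lambda>k. if k < n then schauder_coeff xb x k else 0)) j
                 * z j i) *\<^sub>R yb i) - f x) \<le> \<delta>)"
proof -
  obtain \<rho> where "\<rho> > 0" and \<rho>: "\<And>x x'. norm (x - x') < \<rho> \<Longrightarrow> norm (f x - f x') < \<epsilon> / 4"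
    using holder_continuous_imp_uniformly_continuous[OF assms(5)] \<open>\<epsilon> > 0\<close>
    unfolding uniformly_continuous_on_def dist_norm by (metis UNIV_I divide_pos_pos zero_less_numeral)
  then have "\<rho> / 4 > 0"
    by simp
  then have "\<forall>\<^sub>F n in sequentially. \<forall>x\<in>K. norm (x - schauder_partial_sum xb n x) < \<rho> / 4"
    using uniform_limitD[OF uniform_limit_schauder_partial_sum[OF assms(3,8)] \<open>\<rho> / 4 > 0\<close>]
    by (simp add: dist_norm norm_minus_commute)
  then obtain n where "n \<ge> 1" and trunc: "\<forall>x\<in>K. norm (x - schauder_partial_sum xb n x) < \<rho> / 4"
    by (rule eventually_sequentially_ex_ge)
  obtain N :: nat and p where "N \<ge> 1" and net: "\<forall>x\<in>K. \<exists>j<N. dist x (p j) < \<rho> / 4"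
    using compact_indexed_net[OF assms(8) \<open>\<rho> / 4 > 0\<close>] .
  have "\<epsilon> / 4 > 0"
    using \<open>\<epsilon> > 0\<close> by simp
  have "\<forall>\<^sub>F q in sequentially. norm (schauder_partial_sum yb q y - y) < \<epsilon> / 4" for y
    using tendstoD[OF schauder_partial_sum_tendsto[OF assms(4)] \<open>\<epsilon> / 4 > 0\<close>] by (simp add: dist_norm)
  then have "\<forall>\<^sub>F q in sequentially. \<forall>j\<in>{..<N}. norm (schauder_partial_sum yb q (f (p j)) - f (p j)) < \<epsilon> / 4"
    by (simp add: eventually_ball_finite)
  then obtain q where "q \<ge> 1"
    and out: "\<forall>j\<in>{..<N}. norm (schauder_partial_sum yb q (f (p j)) - f (p j)) < \<epsilon> / 4"
    by (rule eventually_sequentially_ex_ge)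
  let ?coeffs = "\<lambda>x k. if k < n then schauder_coeff xb x k else 0"
  let ?g = "\<lambda>v j. if j < N then - (6 / \<rho>) * norm ((\<Sum>k<n. v k *\<^sub>R xb k) - p j) else 0"
  let ?W = "sqrt N * (6 / \<rho>) * (\<Sum>k<n. norm (xb k))"
  have modulus: "modulus (\<lambda>t. ?W * t)"
    using \<open>\<rho> > 0\<close> by (intro modulus_linear mult_nonneg_nonneg sum_nonneg) auto
  have features: "unif_cont_mod (\<lambda>t. ?W * t) n N ?g"
    using \<open>\<rho> > 0\<close> by (intro unif_cont_mod_neg_dist) simp
  have coeffs: "?coeffs ` K \<subseteq> euclid n"
    by (auto simp: euclid_def)
  obtain c fh where "fh \<in> F n N c" and fh: "\<forall>v\<in>?coeffs ` K. enorm N (?g v - fh v) < 1/4"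
    using universal_approximator_approx[OF assms(6) modulus features
        compact_schauder_coeff_image[OF assms(3,8)] coeffs, of "1/4"]
    by auto
  have "norm ((\<Sum>j<N. \<Sum>i<q. (proj_simplex N (fh (?coeffs x)) j * schauder_coeff yb (f (p j)) i) *\<^sub>R yb i)
      - f x) \<le> \<epsilon> / 2" if "x \<in> K" for x
  proof -
    let ?v = "?coeffs x"
    have "enorm N (?g ?v - fh ?v) < 1/4"
      by (rule bspec[OF fh imageI[OF \<open>x \<in> K\<close>]])
    then have bound: "\<bar>(?g ?v - fh ?v) j\<bar> < 1/4" if "j < N" for j
      by (rule le_less_trans[OF abs_le_enorm[OF that]])
    have "(\<Sum>k<n. ?v k *\<^sub>R xb k) = schauder_partial_sum xb n x"
      by (simp add: schauder_partial_sum_def)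
    then have eq: "(?g ?v - fh ?v) j = - (fh ?v j + 6 / \<rho> * norm (schauder_partial_sum xb n x - p j))"
      if "j < N" for j
      using that by simp
    have approx: "\<bar>fh ?v j + 6 / \<rho> * norm (schauder_partial_sum xb n x - p j)\<bar> < 1/4"
      if "j < N" for j
      using bound[OF that] unfolding eq[OF that] abs_minus_cancel .
    obtain j0 where "j0 < N" "norm (x - p j0) < \<rho> / 4"
      using net \<open>x \<in> K\<close> by (auto simp: dist_norm)
    then have "norm ((\<Sum>j<N. proj_simplex N (fh ?v) j *\<^sub>R schauder_partial_sum yb q (f (p j))) - f x)
        \<le> \<epsilon> / 2"
      using trunc out approx \<open>x \<in> K\<close>
      by (intro proj_simplex_weighted_net_approx[OF \<open>N \<ge> 1\<close> \<open>\<rho> > 0\<close> \<rho>, where h = "fh ?v"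
            and s = "schauder_partial_sum xb n x"]) auto
    then show ?thesis
      by (simp add: schauder_partial_sum_def scaleR_sum_right)
  qed
  then have close: "\<exists>\<delta><\<epsilon>. \<forall>x\<in>K. norm ((\<Sum>j<N. \<Sum>i<q.
      (proj_simplex N (fh (?coeffs x)) j * schauder_coeff yb (f (p j)) i) *\<^sub>R yb i) - f x) \<le> \<delta>"
    using \<open>\<epsilon> > 0\<close> by (intro exI[of _ "\<epsilon> / 2"]) auto
  show ?thesis
    by (rule exI[of _ n], rule exI[of _ N], rule exI[of _ q], rule exI[of _ fh],
        rule exI[of _ "\<lambda>j. schauder_coeff yb (f (p j))"])
      (use \<open>n \<ge> 1\<close> \<open>N \<ge> 1\<close> \<open>q \<ge> 1\<close> \<open>fh \<in> F n N c\<close> close in blast)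
qed

end
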